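(* Let $n$ be a positive integer, let $R_1,R_2,\dots,R_{n+1}$ be commutative rings and let $R=R_1\times R_2\times\cdots\times R_{n+1}$. Then every proper ideal of $R$ is a weakly $n$-absorbing ideal of $R$ if and only if all of the $R_i$'s are fields.
   Context: All rings are commutative with $1\neq0$. A proper ideal $I$ of $R$ is weakly $n$-absorbing if whenever $0\neq a_1\cdots a_{n+1}\in I$ with $a_1,\dots,a_{n+1}\in R$, there are $n$ of the $a_i$'s whose product is in $I$. *)

theory Defs
  imports "HOL-Algebra.Algebra"
begin

definition weakly_n_absorbing :: "('a, 'b) ring_scheme \<Rightarrow> nat \<Rightarrow> 'a set \<Rightarrow> bool" where
  "weakly_n_absorbing R n I \<longleftrightarrow>
     ideal I R \<and> I \<noteq> carrier R \<and>
     (\<forall>a. a \<in> {..n} \<rightarrow> carrier R \<longrightarrow>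
        finprod R a {..n} \<noteq> \<zero>\<^bsub>R\<^esub> \<longrightarrow> finprod R a {..n} \<in> I \<longrightarrow>
        (\<exists>j\<le>n. finprod R a ({..n} - {j}) \<in> I))"

end

theory Submission
  imports Defs
begin

text \<open>In a product of fields, an element vanishing wherever \<open>x\<close> vanishes lies in the principal
  ideal of \<open>x\<close>. If \<open>0 \<noteq> a\<^sub>0 \<cdots> a\<^sub>n \<in> I\<close>, at most \<open>n\<close> coordinates of the
  product vanish, each of them because some factor vanishes there.
  Conversely, let \<open>x\<close> be a nonzero nonunit of \<open>R\<^sub>m\<close> and let \<open>y\<close> have \<open>x\<close> in coordinate \<open>m\<close> and
  \<open>0\<close> elsewhere. With \<open>a\<^sub>k\<close> equal to \<open>y\<close> in coordinate \<open>k\<close> and \<open>1\<close> elsewhere,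
  \<open>a\<^sub>0 \<cdots> a\<^sub>n = y\<close> is a nonzero element of \<open>(y)\<close>, but omitting \<open>a\<^sub>j\<close> leaves \<open>1\<close> in coordinate
  \<open>j\<close>, whereas all coordinates of \<open>y\<close> are nonunits.\<close>

lemma RDirProd_list_carrier_iff:
  "xs \<in> carrier (RDirProd_list Rs) \<longleftrightarrow>
     length xs = length Rs \<and> (\<forall>i < length Rs. xs ! i \<in> carrier (Rs ! i))"
  using RDirProd_list_carrier_mem RDirProd_list_carrier_memI by metis

lemma RDirProd_list_update_closed:
  assumes "xs \<in> carrier (RDirProd_list Rs)" "i < length Rs \<Longrightarrow> y \<in> carrier (Rs ! i)"
  shows "xs[i := y] \<in> carrier (RDirProd_list Rs)"
  using assms by (cases "i < length xs") (auto simp: RDirProd_list_carrier_iff nth_list_update)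

lemma RDirProd_list_one_nth: "i < length Rs \<Longrightarrow> \<one>\<^bsub>RDirProd_list Rs\<^esub> ! i = \<one>\<^bsub>Rs ! i\<^esub>"
  unfolding RDirProd_list_one by (induct Rs arbitrary: i) (auto simp: nth_Cons split: nat.splits)

lemma RDirProd_list_zero_nth: "i < length Rs \<Longrightarrow> \<zero>\<^bsub>RDirProd_list Rs\<^esub> ! i = \<zero>\<^bsub>Rs ! i\<^esub>"
  unfolding RDirProd_list_zero by (induct Rs arbitrary: i) (auto simp: nth_Cons split: nat.splits)

lemma RDirProd_list_eqI:
  assumes "xs \<in> carrier (RDirProd_list Rs)" "ys \<in> carrier (RDirProd_list Rs)"
    and "\<And>i. i < length Rs \<Longrightarrow> xs ! i = ys ! i"
  shows "xs = ys"
  using assms by (intro nth_equalityI) (auto simp: RDirProd_list_carrier_iff)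

lemma RDirProd_list_mult_Cons:
  assumes "x \<in> carrier R" "y \<in> carrier R"
    and "xs \<in> carrier (RDirProd_list Rs)" "ys \<in> carrier (RDirProd_list Rs)"
  shows "(x # xs) \<otimes>\<^bsub>RDirProd_list (R # Rs)\<^esub> (y # ys) =
           (x \<otimes>\<^bsub>R\<^esub> y) # (xs \<otimes>\<^bsub>RDirProd_list Rs\<^esub> ys)"
proof -
  have "(x, xs) \<in> carrier (RDirProd R (RDirProd_list Rs))"
       "(y, ys) \<in> carrier (RDirProd R (RDirProd_list Rs))"
    using assms by (auto simp: RDirProd_carrier)
  from ring_hom_mult[OF RDirProd_list_hom1 this] show ?thesis
    by (simp add: RDirProd_def DirProd_def monoid.defs)
qed

lemma RDirProd_list_mult_nth:
  assumes "xs \<in> carrier (RDirProd_list Rs)" "ys \<in> carrier (RDirProd_list Rs)" "i < length Rs"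
  shows "(xs \<otimes>\<^bsub>RDirProd_list Rs\<^esub> ys) ! i = xs ! i \<otimes>\<^bsub>Rs ! i\<^esub> ys ! i"
  using assms
proof (induct Rs arbitrary: xs ys i)
  case Nil
  then show ?case by simp
next
  case (Cons R Rs)
  obtain x xs' y ys' where "xs = x # xs'" "ys = y # ys'"
    and "x \<in> carrier R" "xs' \<in> carrier (RDirProd_list Rs)"
    and "y \<in> carrier R" "ys' \<in> carrier (RDirProd_list Rs)"
    using Cons.prems(1,2) unfolding RDirProd_list_carrier by auto
  with Cons show ?case
    by (cases i) (simp_all add: RDirProd_list_mult_Cons)
qed

lemma RDirProd_list_is_cring:
  assumes "\<And>i. i < length Rs \<Longrightarrow> cring (Rs ! i)"
  shows "cring (RDirProd_list Rs)"
proof -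
  have ring: "ring (RDirProd_list Rs)"
    using RDirProd_list_is_ring assms cring.axioms(1) by blast
  interpret ring "RDirProd_list Rs" by (rule ring)
  have "comm_monoid (RDirProd_list Rs)"
  proof (rule monoid_comm_monoidI)
    fix x y
    assume xy: "x \<in> carrier (RDirProd_list Rs)" "y \<in> carrier (RDirProd_list Rs)"
    show "x \<otimes>\<^bsub>RDirProd_list Rs\<^esub> y = y \<otimes>\<^bsub>RDirProd_list Rs\<^esub> x"
    proof (rule RDirProd_list_eqI)
      fix i
      assume "i < length Rs"
      with xy show "(x \<otimes>\<^bsub>RDirProd_list Rs\<^esub> y) ! i = (y \<otimes>\<^bsub>RDirProd_list Rs\<^esub> x) ! i"
        by (simp add: RDirProd_list_mult_nth RDirProd_list_carrier_iff
                      cring.cring_simprules(14)[OF assms])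
    qed (use xy in auto)
  qed
  then show ?thesis
    by (simp add: cring_def ring)
qed

lemma RDirProd_list_finprod_nth:
  assumes "\<And>i. i < length Rs \<Longrightarrow> cring (Rs ! i)"
    and "finite A" "f \<in> A \<rightarrow> carrier (RDirProd_list Rs)" "i < length Rs"
  shows "finprod (RDirProd_list Rs) f A ! i = finprod (Rs ! i) (\<lambda>k. f k ! i) A"
proof -
  interpret cring "RDirProd_list Rs" using RDirProd_list_is_cring assms(1) .
  interpret R: cring "Rs ! i" using assms(1,4) .
  show ?thesis
    using assms(2,3)
  proof (induct A rule: finite_induct)
    case empty
    show ?case using RDirProd_list_one_nth[OF assms(4)] by simp
  next
    case (insert k A)
    have "(\<lambda>k. f k ! i) \<in> insert k A \<rightarrow> carrier (Rs ! i)"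
      using insert.prems assms(4) by (auto intro: RDirProd_list_carrier_mem(2))
    with insert assms(4) show ?case
      by (simp add: RDirProd_list_mult_nth)
  qed
qed

lemma (in cring) finprod_zero_factor:
  assumes "finite A" "k \<in> A" "f \<in> A \<rightarrow> carrier R" "f k = \<zero>"
  shows "finprod R f A = \<zero>"
proof -
  have "finprod R f (insert k (A - {k})) = f k \<otimes> finprod R f (A - {k})"
    using assms by (intro finprod_insert) auto
  moreover have "finprod R f (A - {k}) \<in> carrier R"
    using assms by (intro finprod_closed) auto
  ultimately show ?thesis
    using assms by (simp add: insert_absorb)
qed

lemma (in domain) finprod_zero_imp_factor_zero:
  assumes "finite A" "f \<in> A \<rightarrow> carrier R" "finprod R f A = \<zero>"
  shows "\<exists>k\<in>A. f k = \<zero>"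
  using assms
proof (induct A rule: finite_induct)
  case (insert k A)
  then have "f k = \<zero> \<or> finprod R f A = \<zero>"
    by (intro integral) auto
  with insert show ?case by auto
qed simp

lemma (in ring) zero_notin_Units:
  assumes "\<one> \<noteq> \<zero>"
  shows "\<zero> \<notin> Units R"
proof
  assume unit: "\<zero> \<in> Units R"
  have "\<one> = inv \<zero> \<otimes> \<zero>"
    using Units_l_inv[OF unit] by simp
  also have "\<dots> = \<zero>"
    using Units_inv_closed[OF unit] by simp
  finally show False
    using assms by simp
qed

lemma (in cring) nonzero_nonunit_if_not_field:
  assumes "\<one> \<noteq> \<zero>" "\<not> field R"
  shows "\<exists>x \<in> carrier R. x \<noteq> \<zero> \<and> x \<notin> Units R"
proof (rule ccontr)
  assume "\<not> ?thesis"
  then have "carrier R - {\<zero>} \<subseteq> Units R"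
    by blast
  moreover have "Units R \<subseteq> carrier R - {\<zero>}"
    using zero_notin_Units[OF assms(1)] Units_closed by blast
  ultimately show False
    using cring_fieldI assms(2) by blast
qed

lemma RDirProd_list_finprod_update_one_nth:
  assumes "\<And>i. i < length Rs \<Longrightarrow> cring (Rs ! i)"
    and "finite A" "x \<in> carrier (RDirProd_list Rs)" "l < length Rs"
  shows "finprod (RDirProd_list Rs) (\<lambda>k. (\<one>\<^bsub>RDirProd_list Rs\<^esub>)[k := x ! k]) A ! l =
           (if l \<in> A then x ! l else \<one>\<^bsub>Rs ! l\<^esub>)"
proof -
  interpret P: cring "RDirProd_list Rs" using RDirProd_list_is_cring assms(1) .
  interpret R: cring "Rs ! l" using assms(1,4) .
  have one_len: "length \<one>\<^bsub>RDirProd_list Rs\<^esub> = length Rs"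
    using P.one_closed RDirProd_list_carrier_iff by blast
  have x_l: "x ! l \<in> carrier (Rs ! l)"
    using assms(3,4) RDirProd_list_carrier_iff by blast
  have coord: "(\<one>\<^bsub>RDirProd_list Rs\<^esub>)[k := x ! k] ! l =
                 (if k = l then x ! l else \<one>\<^bsub>Rs ! l\<^esub>)" for k
    using assms(4) by (simp add: nth_list_update one_len RDirProd_list_one_nth)
  have "(\<one>\<^bsub>RDirProd_list Rs\<^esub>)[k := x ! k] \<in> carrier (RDirProd_list Rs)" for k
    by (rule RDirProd_list_update_closed[OF P.one_closed])
      (use assms(3) in \<open>simp add: RDirProd_list_carrier_iff\<close>)
  then have factors:
    "(\<lambda>k. (\<one>\<^bsub>RDirProd_list Rs\<^esub>)[k := x ! k]) \<in> A \<rightarrow> carrier (RDirProd_list Rs)"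
    by blast
  have "finprod (RDirProd_list Rs) (\<lambda>k. (\<one>\<^bsub>RDirProd_list Rs\<^esub>)[k := x ! k]) A ! l =
          finprod (Rs ! l) (\<lambda>k. (\<one>\<^bsub>RDirProd_list Rs\<^esub>)[k := x ! k] ! l) A"
    using RDirProd_list_finprod_nth[OF assms(1,2) factors assms(4)] by simp
  also have "\<dots> = finprod (Rs ! l) (\<lambda>k. if k = l then x ! l else \<one>\<^bsub>Rs ! l\<^esub>) A"
    by (simp only: coord)
  also have "\<dots> = (if l \<in> A then x ! l else \<one>\<^bsub>Rs ! l\<^esub>)"
  proof (cases "l \<in> A")
    case True
    then show ?thesis
      using R.finprod_singleton_swap[OF True assms(2), of "\<lambda>_. x ! l"] x_l by simp
  next
    case False
    then have "finprod (Rs ! l) (\<lambda>k. if k = l then x ! l else \<one>\<^bsub>Rs ! l\<^esub>) A = \<one>\<^bsub>Rs ! l\<^esub>"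
      by (intro R.finprod_one_eqI) auto
    with False show ?thesis by simp
  qed
  finally show ?thesis .
qed

lemma RDirProd_list_cgenideal_nth_neq_one:
  assumes "\<And>i. i < length Rs \<Longrightarrow> cring (Rs ! i)"
    and "x \<in> carrier (RDirProd_list Rs)" "y \<in> PIdl\<^bsub>RDirProd_list Rs\<^esub> x"
    and "i < length Rs" "x ! i \<notin> Units (Rs ! i)"
  shows "y ! i \<noteq> \<one>\<^bsub>Rs ! i\<^esub>"
proof
  interpret R: cring "Rs ! i" using assms(1,4) .
  obtain r where r: "r \<in> carrier (RDirProd_list Rs)" "y = r \<otimes>\<^bsub>RDirProd_list Rs\<^esub> x"
    using assms(3) unfolding cgenideal_def by blast
  have ri: "r ! i \<in> carrier (Rs ! i)" and xi: "x ! i \<in> carrier (Rs ! i)"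
    using r(1) assms(2,4) RDirProd_list_carrier_iff by blast+
  assume "y ! i = \<one>\<^bsub>Rs ! i\<^esub>"
  then have "x ! i \<otimes>\<^bsub>Rs ! i\<^esub> r ! i \<in> Units (Rs ! i)"
    using r assms(2,4) ri xi by (simp add: RDirProd_list_mult_nth R.m_comm)
  then show False
    using R.unit_factor ri xi assms(5) by blast
qed

lemma RDirProd_list_cgenideal_proper:
  assumes "\<And>i. i < length Rs \<Longrightarrow> cring (Rs ! i)"
    and "x \<in> carrier (RDirProd_list Rs)" "i < length Rs" "x ! i \<notin> Units (Rs ! i)"
  shows "PIdl\<^bsub>RDirProd_list Rs\<^esub> x \<noteq> carrier (RDirProd_list Rs)"
proof
  interpret P: cring "RDirProd_list Rs" using RDirProd_list_is_cring assms(1) .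
  assume "PIdl\<^bsub>RDirProd_list Rs\<^esub> x = carrier (RDirProd_list Rs)"
  then have "\<one>\<^bsub>RDirProd_list Rs\<^esub> \<in> PIdl\<^bsub>RDirProd_list Rs\<^esub> x"
    by simp
  with RDirProd_list_cgenideal_nth_neq_one[OF assms(1,2) _ assms(3,4)] show False
    using RDirProd_list_one_nth[OF assms(3)] by simp
qed

lemma RDirProd_list_cgenideal_not_weakly_n_absorbing:
  assumes "\<And>i. i < length Rs \<Longrightarrow> cring (Rs ! i)" "length Rs = n + 1"
    and "x \<in> carrier (RDirProd_list Rs)" "x \<noteq> \<zero>\<^bsub>RDirProd_list Rs\<^esub>"
    and "\<And>i. i < length Rs \<Longrightarrow> x ! i \<notin> Units (Rs ! i)"
  shows "\<not> weakly_n_absorbing (RDirProd_list Rs) n (PIdl\<^bsub>RDirProd_list Rs\<^esub> x)"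
proof
  interpret P: cring "RDirProd_list Rs" using RDirProd_list_is_cring assms(1) .
  define f where "f k = (\<one>\<^bsub>RDirProd_list Rs\<^esub>)[k := x ! k]" for k
  have f_nth: "finprod (RDirProd_list Rs) f A ! l = (if l \<in> A then x ! l else \<one>\<^bsub>Rs ! l\<^esub>)"
    if "finite A" "l < length Rs" for A l
    unfolding f_def
    using RDirProd_list_finprod_update_one_nth[OF assms(1) that(1) assms(3) that(2)] .
  have f: "f \<in> A \<rightarrow> carrier (RDirProd_list Rs)" for A
    unfolding f_def using assms(3)
    by (auto intro!: RDirProd_list_update_closed simp: RDirProd_list_carrier_iff)
  have "finprod (RDirProd_list Rs) f {..n} = x"
    by (rule RDirProd_list_eqI) (use assms(2,3) f f_nth in auto)
  moreover assume "weakly_n_absorbing (RDirProd_list Rs) n (PIdl\<^bsub>RDirProd_list Rs\<^esub> x)"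
  ultimately obtain j where "j \<le> n"
    and "finprod (RDirProd_list Rs) f ({..n} - {j}) \<in> PIdl\<^bsub>RDirProd_list Rs\<^esub> x"
    using f assms(3,4) P.cgenideal_self unfolding weakly_n_absorbing_def by blast
  moreover have "finprod (RDirProd_list Rs) f ({..n} - {j}) ! j = \<one>\<^bsub>Rs ! j\<^esub>"
    using f_nth assms(2) \<open>j \<le> n\<close> by simp
  ultimately show False
    using RDirProd_list_cgenideal_nth_neq_one[OF assms(1,3)] assms(2,5) by force
qed

lemma RDirProd_list_fields_in_cgenideal:
  assumes "\<And>i. i < length Rs \<Longrightarrow> field (Rs ! i)"
    and "x \<in> carrier (RDirProd_list Rs)" "y \<in> carrier (RDirProd_list Rs)"
    and "\<And>i. i < length Rs \<Longrightarrow> x ! i = \<zero>\<^bsub>Rs ! i\<^esub> \<Longrightarrow> y ! i = \<zero>\<^bsub>Rs ! i\<^esub>"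
  shows "y \<in> PIdl\<^bsub>RDirProd_list Rs\<^esub> x"
proof -
  define c where "c = map (\<lambda>i. if x ! i = \<zero>\<^bsub>Rs ! i\<^esub> then \<zero>\<^bsub>Rs ! i\<^esub>
                                 else y ! i \<otimes>\<^bsub>Rs ! i\<^esub> inv\<^bsub>Rs ! i\<^esub> (x ! i)) [0..<length Rs]"
  have coord: "c ! i \<in> carrier (Rs ! i) \<and> y ! i = c ! i \<otimes>\<^bsub>Rs ! i\<^esub> x ! i"
    if i: "i < length Rs" for i
  proof -
    interpret R: field "Rs ! i" using assms(1) i .
    have xi: "x ! i \<in> carrier (Rs ! i)" and yi: "y ! i \<in> carrier (Rs ! i)"
      using assms(2,3) i RDirProd_list_carrier_iff by blast+
    have ci: "c ! i = (if x ! i = \<zero>\<^bsub>Rs ! i\<^esub> then \<zero>\<^bsub>Rs ! i\<^esub>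
                       else y ! i \<otimes>\<^bsub>Rs ! i\<^esub> inv\<^bsub>Rs ! i\<^esub> (x ! i))"
      unfolding c_def using i by simp
    show ?thesis
    proof (cases "x ! i = \<zero>\<^bsub>Rs ! i\<^esub>")
      case True
      then show ?thesis using ci assms(4)[OF i True] by simp
    next
      case False
      then have u: "x ! i \<in> Units (Rs ! i)"
        using R.field_Units xi by blast
      then show ?thesis
        using ci False R.m_assoc[OF yi R.Units_inv_closed[OF u] xi] yi by simp
    qed
  qed
  have c: "c \<in> carrier (RDirProd_list Rs)"
    using coord unfolding RDirProd_list_carrier_iff c_def by simp
  interpret P: cring "RDirProd_list Rs"
    using RDirProd_list_is_cring assms(1) field.axioms(1) domain.axioms(1) by blast
  have "y = c \<otimes>\<^bsub>RDirProd_list Rs\<^esub> x"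
  proof (rule RDirProd_list_eqI)
    fix i
    assume "i < length Rs"
    then show "y ! i = (c \<otimes>\<^bsub>RDirProd_list Rs\<^esub> x) ! i"
      using coord RDirProd_list_mult_nth[OF c assms(2)] by simp
  qed (use assms(2,3) c in simp_all)
  then show ?thesis
    unfolding cgenideal_def using c by blast
qed

lemma RDirProd_list_domains_finprod_omit_factor:
  assumes "\<And>i. i < length Rs \<Longrightarrow> domain (Rs ! i)" "length Rs = n + 1"
    and "f \<in> {..n} \<rightarrow> carrier (RDirProd_list Rs)"
    and "finprod (RDirProd_list Rs) f {..n} \<noteq> \<zero>\<^bsub>RDirProd_list Rs\<^esub>"
  shows "\<exists>j\<le>n. \<forall>l<n + 1. finprod (RDirProd_list Rs) f {..n} ! l = \<zero>\<^bsub>Rs ! l\<^esub> \<longrightarrow>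
                          finprod (RDirProd_list Rs) f ({..n} - {j}) ! l = \<zero>\<^bsub>Rs ! l\<^esub>"
proof -
  have cring: "\<And>i. i < length Rs \<Longrightarrow> cring (Rs ! i)"
    using assms(1) domain.axioms(1) by blast
  interpret P: cring "RDirProd_list Rs" using RDirProd_list_is_cring cring .
  have f_nth: "finprod (RDirProd_list Rs) f A ! l = finprod (Rs ! l) (\<lambda>k. f k ! l) A"
    if A: "A \<subseteq> {..n}" and l: "l < n + 1" for A l
  proof (rule RDirProd_list_finprod_nth[OF cring])
    show "finite A"
      using A finite_subset by blast
    show "f \<in> A \<rightarrow> carrier (RDirProd_list Rs)"
      using A assms(3) by auto
    show "l < length Rs"
      using l assms(2) by simp
  qed
  have f_coord: "(\<lambda>k. f k ! l) \<in> A \<rightarrow> carrier (Rs ! l)"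
    if A: "A \<subseteq> {..n}" and l: "l < n + 1" for A l
  proof
    fix k
    assume "k \<in> A"
    then have "f k \<in> carrier (RDirProd_list Rs)"
      using A assms(3) by auto
    then show "f k ! l \<in> carrier (Rs ! l)"
      by (rule RDirProd_list_carrier_mem(2)) (use l assms(2) in simp)
  qed
  define T where "T = {l. l < n + 1 \<and> finprod (RDirProd_list Rs) f {..n} ! l = \<zero>\<^bsub>Rs ! l\<^esub>}"
  have "T \<noteq> {..n}"
  proof
    assume all_zero: "T = {..n}"
    have "finprod (RDirProd_list Rs) f {..n} = \<zero>\<^bsub>RDirProd_list Rs\<^esub>"
    proof (rule RDirProd_list_eqI)
      fix l
      assume l: "l < length Rs"
      then have "l \<in> T"
        using all_zero assms(2) by auto
      then show "finprod (RDirProd_list Rs) f {..n} ! l = \<zero>\<^bsub>RDirProd_list Rs\<^esub> ! l"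
        using RDirProd_list_zero_nth[OF l] unfolding T_def by simp
    qed (use assms(3) in simp_all)
    with assms(4) show False ..
  qed
  then have "card T < card {..n}"
    by (intro psubset_card_mono) (auto simp: T_def)
  have "\<exists>k\<le>n. f k ! l = \<zero>\<^bsub>Rs ! l\<^esub>" if "l \<in> T" for l
  proof -
    have l: "l < n + 1" and "finprod (Rs ! l) (\<lambda>k. f k ! l) {..n} = \<zero>\<^bsub>Rs ! l\<^esub>"
      using that f_nth unfolding T_def by auto
    with domain.finprod_zero_imp_factor_zero[OF assms(1) _ f_coord[OF subset_refl l]]
    show ?thesis
      using assms(2) by auto
  qed
  then have "\<forall>l\<in>T. \<exists>k. k \<le> n \<and> f k ! l = \<zero>\<^bsub>Rs ! l\<^esub>"
    by blast
  from bchoice[OF this] obtain w where w: "\<forall>l\<in>T. w l \<le> n \<and> f (w l) ! l = \<zero>\<^bsub>Rs ! l\<^esub>"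
    by blast
  have "card (w ` T) < card {..n}"
    using card_image_le[of T w] \<open>card T < card {..n}\<close> by (simp add: T_def)
  then have "\<not> {..n} \<subseteq> w ` T"
    using card_mono[of "w ` T" "{..n}"] T_def by auto
  then obtain j where j: "j \<le> n" "j \<notin> w ` T"
    by blast
  have "finprod (RDirProd_list Rs) f ({..n} - {j}) ! l = \<zero>\<^bsub>Rs ! l\<^esub>" if "l \<in> T" for l
  proof -
    have l: "l < n + 1" using that unfolding T_def by simp
    have "w l \<in> {..n} - {j}" and "f (w l) ! l = \<zero>\<^bsub>Rs ! l\<^esub>"
      using w that j by auto
    then have "finprod (Rs ! l) (\<lambda>k. f k ! l) ({..n} - {j}) = \<zero>\<^bsub>Rs ! l\<^esub>"
      by (intro cring.finprod_zero_factor[OF cring _ _ f_coord[OF _ l]]) (use l assms(2) in auto)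
    then show ?thesis using f_nth l by simp
  qed
  with j show ?thesis
    unfolding T_def by blast
qed

lemma RDirProd_list_fields_weakly_n_absorbing:
  assumes "\<And>i. i < length Rs \<Longrightarrow> field (Rs ! i)" "length Rs = n + 1"
    and "ideal I (RDirProd_list Rs)" "I \<noteq> carrier (RDirProd_list Rs)"
  shows "weakly_n_absorbing (RDirProd_list Rs) n I"
  unfolding weakly_n_absorbing_def
proof (intro conjI allI impI)
  interpret P: cring "RDirProd_list Rs"
    using RDirProd_list_is_cring assms(1) field.axioms(1) domain.axioms(1) by blast
  fix f
  assume f: "f \<in> {..n} \<rightarrow> carrier (RDirProd_list Rs)"
    and nonzero: "finprod (RDirProd_list Rs) f {..n} \<noteq> \<zero>\<^bsub>RDirProd_list Rs\<^esub>"
    and mem: "finprod (RDirProd_list Rs) f {..n} \<in> I"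
  obtain j where "j \<le> n"
    and zeros: "\<And>l. l < n + 1 \<Longrightarrow> finprod (RDirProd_list Rs) f {..n} ! l = \<zero>\<^bsub>Rs ! l\<^esub> \<Longrightarrow>
                     finprod (RDirProd_list Rs) f ({..n} - {j}) ! l = \<zero>\<^bsub>Rs ! l\<^esub>"
    using RDirProd_list_domains_finprod_omit_factor[OF _ assms(2) f nonzero]
      assms(1) field.axioms(1) by blast
  have "finprod (RDirProd_list Rs) f ({..n} - {j})
          \<in> PIdl\<^bsub>RDirProd_list Rs\<^esub> (finprod (RDirProd_list Rs) f {..n})"
  proof (rule RDirProd_list_fields_in_cgenideal[OF assms(1)])
    show "finprod (RDirProd_list Rs) f {..n} \<in> carrier (RDirProd_list Rs)"
         "finprod (RDirProd_list Rs) f ({..n} - {j}) \<in> carrier (RDirProd_list Rs)"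
      using f by (auto intro: P.finprod_closed)
  qed (use zeros assms(2) in auto)
  also have "\<dots> \<subseteq> I"
    using P.cgenideal_minimal[OF assms(3) mem] .
  finally show "\<exists>j\<le>n. finprod (RDirProd_list Rs) f ({..n} - {j}) \<in> I"
    using \<open>j \<le> n\<close> by blast
qed (use assms(3,4) in auto)

lemma RDirProd_list_not_field_imp_not_weakly_n_absorbing:
  assumes "\<And>i. i < length Rs \<Longrightarrow> cring (Rs ! i)"
    and "\<And>i. i < length Rs \<Longrightarrow> \<one>\<^bsub>Rs ! i\<^esub> \<noteq> \<zero>\<^bsub>Rs ! i\<^esub>"
    and "length Rs = n + 1" "m < length Rs" "\<not> field (Rs ! m)"
  shows "\<exists>I. ideal I (RDirProd_list Rs) \<and> I \<noteq> carrier (RDirProd_list Rs) \<and>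
             \<not> weakly_n_absorbing (RDirProd_list Rs) n I"
proof -
  interpret P: cring "RDirProd_list Rs" using RDirProd_list_is_cring assms(1) .
  obtain x where x: "x \<in> carrier (Rs ! m)" "x \<noteq> \<zero>\<^bsub>Rs ! m\<^esub>" "x \<notin> Units (Rs ! m)"
    using cring.nonzero_nonunit_if_not_field[OF assms(1)[OF assms(4)] assms(2)[OF assms(4)] assms(5)]
    by blast
  define y where "y = (\<zero>\<^bsub>RDirProd_list Rs\<^esub>)[m := x]"
  have y: "y \<in> carrier (RDirProd_list Rs)"
    unfolding y_def using x(1) by (intro RDirProd_list_update_closed) simp_all
  have y_nth: "y ! i = (if i = m then x else \<zero>\<^bsub>Rs ! i\<^esub>)" if "i < length Rs" for i
    using that assms(4) P.zero_closed
    by (auto simp: y_def nth_list_update RDirProd_list_carrier_iff RDirProd_list_zero_nth)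
  have "y \<noteq> \<zero>\<^bsub>RDirProd_list Rs\<^esub>"
    using y_nth[OF assms(4)] RDirProd_list_zero_nth[OF assms(4)] x(2) by auto
  moreover have nonunit: "y ! i \<notin> Units (Rs ! i)" if "i < length Rs" for i
    using y_nth[OF that] x(3) ring.zero_notin_Units[OF cring.axioms(1)[OF assms(1)] assms(2)] that
    by auto
  ultimately show ?thesis
    using RDirProd_list_cgenideal_not_weakly_n_absorbing[OF assms(1,3) y]
      P.cgenideal_ideal[OF y]
      RDirProd_list_cgenideal_proper[OF assms(1) y assms(4) nonunit[OF assms(4)]]
    by blast
qed

theorem mainTheorem10:
  fixes Rs :: "('a, 'b) ring_scheme list" and n :: nat
  assumes "n \<ge> 1"
    and "length Rs = n + 1"
    and "\<And>i. i < n + 1 \<Longrightarrow> cring (Rs ! i)"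
    and "\<And>i. i < n + 1 \<Longrightarrow> \<one>\<^bsub>Rs ! i\<^esub> \<noteq> \<zero>\<^bsub>Rs ! i\<^esub>"
  shows "(\<forall>I. ideal I (RDirProd_list Rs) \<and> I \<noteq> carrier (RDirProd_list Rs)
              \<longrightarrow> weakly_n_absorbing (RDirProd_list Rs) n I)
         \<longleftrightarrow> (\<forall>i < n + 1. field (Rs ! i))"
proof -
  have cring: "\<And>i. i < length Rs \<Longrightarrow> cring (Rs ! i)"
    and nontrivial: "\<And>i. i < length Rs \<Longrightarrow> \<one>\<^bsub>Rs ! i\<^esub> \<noteq> \<zero>\<^bsub>Rs ! i\<^esub>"
    using assms(2-4) by simp_all
  show ?thesis
  proof (intro iffI allI impI)
    fix i
    assume all_weakly: "\<forall>I. ideal I (RDirProd_list Rs) \<and> I \<noteq> carrier (RDirProd_list Rs)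
                          \<longrightarrow> weakly_n_absorbing (RDirProd_list Rs) n I"
      and "i < n + 1"
    show "field (Rs ! i)"
    proof (rule ccontr)
      assume "\<not> field (Rs ! i)"
      with \<open>i < n + 1\<close> all_weakly show False
        using RDirProd_list_not_field_imp_not_weakly_n_absorbing[OF cring nontrivial assms(2)]
          assms(2) by auto
    qed
  next
    fix I
    assume "\<forall>i < n + 1. field (Rs ! i)"
      and "ideal I (RDirProd_list Rs) \<and> I \<noteq> carrier (RDirProd_list Rs)"
    then show "weakly_n_absorbing (RDirProd_list Rs) n I"
      using RDirProd_list_fields_weakly_n_absorbing[of Rs n] assms(2) by auto
  qed
qed

end
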